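(* Let $G$ be a connected graph with a system of $h$ pairwise non-overlapping paths between two vertices $v_i$ and $v_j$. Then $\{v_i,v_j\}$ is a pair of order $h$ in $G$.
   Context: Graphs are finite, may have multiple edges, no loops. A path is a sequence $u_0,e_1,u_1,\dots,e_\ell,u_\ell$ of vertices and edges with $e_k$ joining $u_{k-1}$ and $u_k$ and the edges pairwise distinct; its length is $\ell$. Two paths do not overlap if they have no common edge. A system of $h$ paths between $v_i$ and $v_j$ is a set of $h$ distinct paths $\mathcal{P}_1,\dots,\mathcal{P}_h$ from $v_i$ to $v_j$, all of the same length $\ell$, such that, numbering the edges of each path $1,\dots,\ell$ consecutively starting at $v_i$, for each $k=1,\dots,\ell$ the graph obtained from $G$ by removing all edges numbered $k$ (in any of the paths) is disconnected. With $c_{ij}$ ($i\neq j$) the number of edges joining $v_i,v_j$, $c_{ii}=-\sum_{j\ne i}c_{ij}$, $M(G)=(c_{ij})$: a pair $\{v_i,v_j\}$ has order $h>0$ if there is $S\in\mathbb{Z}^n$ with $M(G)S=h(e_i-e_j)$ and $\gcd(s_1-s_n,\dots,s_{n-1}-s_n)=1$; equivalently, the class of $e_i-e_j$ in $\mathbb{Z}^n/\mathrm{Im}(M(G))$ has order exactly $h$. *)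

theory Defs
  imports Main
begin

text \<open>Multigraph on vertex set {0..<n} (vertex v_{k+1} of the paper is k here),
  edge identifiers of type 'e, edge set E, endpoint map ends (no loops).\<close>

definition multigraph :: "nat \<Rightarrow> 'e set \<Rightarrow> ('e \<Rightarrow> nat set) \<Rightarrow> bool" where
  "multigraph n E ends \<longleftrightarrow> finite E \<and>
     (\<forall>e\<in>E. \<exists>a b. a \<noteq> b \<and> a < n \<and> b < n \<and> ends e = {a, b})"

definition conn :: "nat \<Rightarrow> 'e set \<Rightarrow> ('e \<Rightarrow> nat set) \<Rightarrow> bool" where
  "conn n F ends \<longleftrightarrow>
     (\<forall>a<n. \<forall>b<n. (a, b) \<in> {(x, y). \<exists>e\<in>F. ends e = {x, y}}\<^sup>*)"

definition is_path :: "'e set \<Rightarrow> ('e \<Rightarrow> nat set) \<Rightarrow> nat list \<times> 'e list \<Rightarrow> bool" where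
  "is_path E ends p \<longleftrightarrow> (let us = fst p; es = snd p in
     length us = Suc (length es) \<and> distinct es \<and> set es \<subseteq> E \<and>
     (\<forall>k<length es. ends (es ! k) = {us ! k, us ! Suc k}))"

definition path_from_to :: "'e set \<Rightarrow> ('e \<Rightarrow> nat set) \<Rightarrow> nat \<Rightarrow> nat \<Rightarrow> nat list \<times> 'e list \<Rightarrow> bool" where
  "path_from_to E ends a b p \<longleftrightarrow> is_path E ends p \<and> hd (fst p) = a \<and> last (fst p) = b"

text \<open>A system of h paths between a and b: a set of h distinct paths from a to b, all of
  the same length l, such that for each k = 1..l removing all edges numbered k
  (edge number k of a path is snd p ! (k-1)) disconnects the graph.\<close>
definition path_system :: "nat \<Rightarrow> 'e set \<Rightarrow> ('e \<Rightarrow> nat set) \<Rightarrow> nat \<Rightarrow> nat \<Rightarrow> nat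
     \<Rightarrow> (nat list \<times> 'e list) set \<Rightarrow> bool" where
  "path_system n E ends a b h P \<longleftrightarrow> finite P \<and> card P = h \<and>
     (\<forall>p\<in>P. path_from_to E ends a b p) \<and>
     (\<exists>l. (\<forall>p\<in>P. length (snd p) = l) \<and>
          (\<forall>k\<in>{1..l}. \<not> conn n (E - (\<lambda>p. snd p ! (k - 1)) ` P) ends))"

definition non_overlapping :: "(nat list \<times> 'e list) set \<Rightarrow> bool" where
  "non_overlapping P \<longleftrightarrow> (\<forall>p\<in>P. \<forall>q\<in>P. p \<noteq> q \<longrightarrow> set (snd p) \<inter> set (snd q) = {})"

definition cmat :: "nat \<Rightarrow> 'e set \<Rightarrow> ('e \<Rightarrow> nat set) \<Rightarrow> nat \<Rightarrow> nat \<Rightarrow> int" where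
  "cmat n E ends r c = (if r \<noteq> c then int (card {e\<in>E. ends e = {r, c}})
      else - (\<Sum>d\<in>{..<n} - {r}. int (card {e\<in>E. ends e = {r, d}})))"

text \<open>The pair {v_i, v_j} has order h > 0: there is S in Z^n with M(G) S = h (e_i - e_j)
  and gcd(s_1 - s_n, ..., s_{n-1} - s_n) = 1 (0-indexed here).\<close>
definition pair_order :: "nat \<Rightarrow> 'e set \<Rightarrow> ('e \<Rightarrow> nat set) \<Rightarrow> nat \<Rightarrow> nat \<Rightarrow> nat \<Rightarrow> bool" where
  "pair_order n E ends i j h \<longleftrightarrow> h > 0 \<and>
     (\<exists>S :: nat \<Rightarrow> int.
        (\<forall>r<n. (\<Sum>c<n. cmat n E ends r c * S c) =
                 int h * ((if r = i then 1 else 0) - (if r = j then 1 else 0))) \<and>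
        Gcd ((\<lambda>k. S k - S (n - 1)) ` {..<n - 1}) = 1)"

end

theory Submission
  imports Defs
begin

text \<open>For t < l let A_t be the component of v_i after deleting the (t+1)-th edges of all
  paths. Prefixes of the paths stay in A_t, and v_j is not in A_t, since otherwise the suffixes
  of the paths would reattach every deleted edge and the deletion would not disconnect G.
  Because the paths do not overlap, the deleted edges are exactly the edges leaving A_t, one
  per path, from its t-th to its (t+1)-th vertex. Hence M(G) maps the indicator of the
  complement of A_t to the sum over the paths of e_{u_t} - e_{u_{t+1}}; summing over t
  telescopes to h (e_i - e_j). The resulting potential S takes the value s at the s-th vertex
  of every path, so some difference S_v - S_{v_n} is \<plusminus>1 and the gcd condition holds.\<close>

definition adjacency :: "('e \<Rightarrow> nat set) \<Rightarrow> 'e set \<Rightarrow> (nat \<times> nat) set" where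
  "adjacency ends F = {(x, y). \<exists>e\<in>F. ends e = {x, y}}"

lemma conn_iff_adjacency:
  "conn n F ends \<longleftrightarrow> (\<forall>a<n. \<forall>b<n. (a, b) \<in> (adjacency ends F)\<^sup>*)"
  by (simp add: conn_def adjacency_def)

lemma adjacency_rtrancl_sym:
  assumes "(x, y) \<in> (adjacency ends F)\<^sup>*"
  shows "(y, x) \<in> (adjacency ends F)\<^sup>*"
proof -
  have "sym (adjacency ends F)"
    by (rule symI) (auto simp: adjacency_def insert_commute)
  then show ?thesis
    using assms by (meson sym_rtrancl symD)
qed

lemma conn_Diff_if_endpoints_reachable:
  assumes "conn n E ends" and "a < n"
    and reach: "\<And>e x. e \<in> C \<Longrightarrow> e \<in> E \<Longrightarrow> x \<in> ends e \<Longrightarrow> (a, x) \<in> (adjacency ends (E - C))\<^sup>*"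
  shows "conn n (E - C) ends"
proof -
  have from_a: "(a, v) \<in> (adjacency ends (E - C))\<^sup>*" if "(a, v) \<in> (adjacency ends E)\<^sup>*" for v
    using that
  proof (induction rule: rtrancl_induct)
    case base
    then show ?case by simp
  next
    case (step v w)
    then obtain e where e: "e \<in> E" "ends e = {v, w}"
      by (auto simp: adjacency_def)
    show ?case
    proof (cases "e \<in> C")
      case True
      then show ?thesis using reach e by auto
    next
      case False
      then have "(v, w) \<in> adjacency ends (E - C)"
        using e by (auto simp: adjacency_def)
      with step.IH show ?thesis by (rule rtrancl_into_rtrancl)
    qed
  qed
  show ?thesis
    unfolding conn_iff_adjacency
  proof (intro allI impI)
    fix x y assume "x < n" "y < n"
    then have "(a, x) \<in> (adjacency ends (E - C))\<^sup>*" "(a, y) \<in> (adjacency ends (E - C))\<^sup>*"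
      using assms(1,2) from_a unfolding conn_iff_adjacency by blast+
    then show "(x, y) \<in> (adjacency ends (E - C))\<^sup>*"
      by (meson adjacency_rtrancl_sym rtrancl_trans)
  qed
qed

lemma is_path_segment_reachable:
  assumes "is_path E ends p" and "a \<le> b" and "b \<le> length (snd p)"
    and avoid: "\<And>t. a \<le> t \<Longrightarrow> t < b \<Longrightarrow> snd p ! t \<notin> F"
  shows "(fst p ! a, fst p ! b) \<in> (adjacency ends (E - F))\<^sup>*"
  using assms(2,3,4)
proof (induction b rule: dec_induct)
  case base
  then show ?case by simp
next
  case (step b)
  have "snd p ! b \<in> E" "ends (snd p ! b) = {fst p ! b, fst p ! Suc b}"
    using assms(1) step.prems(1) by (auto simp: is_path_def Let_def)
  moreover have "snd p ! b \<notin> F"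
    using step.hyps(1) by (rule step.prems(2)) simp
  ultimately have "(fst p ! b, fst p ! Suc b) \<in> adjacency ends (E - F)"
    by (auto simp: adjacency_def)
  with step.IH step.prems show ?case by (simp add: rtrancl_into_rtrancl)
qed

lemma is_path_vertex_less:
  assumes "multigraph n E ends" and "is_path E ends p"
    and "snd p \<noteq> []" and "t \<le> length (snd p)"
  shows "fst p ! t < n"
proof -
  obtain s where s: "s < length (snd p)" "t = s \<or> t = Suc s"
  proof (cases "t < length (snd p)")
    case False
    then show ?thesis
      using assms(3,4) that[of "t - 1"] by (cases t) auto
  qed (use that in auto)
  then have "snd p ! s \<in> E" "fst p ! t \<in> ends (snd p ! s)"
    using assms(2) by (auto simp: is_path_def Let_def)
  then show ?thesis
    using assms(1) unfolding multigraph_def by force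
qed

lemma cmat_mult_eq_sum_incident_edges:
  assumes mg: "multigraph n E ends" and "r < n"
  shows "(\<Sum>c<n. cmat n E ends r c * f c) =
    (\<Sum>e\<in>{e\<in>E. r \<in> ends e}. (\<Sum>x\<in>ends e. f x) - 2 * f r)"
proof -
  let ?T = "{..<n} - {r}" and ?E = "\<lambda>c. {e\<in>E. ends e = {r, c}}"
  have finE: "finite E"
    using mg by (simp add: multigraph_def)
  have "(\<Sum>c<n. cmat n E ends r c * f c) =
      cmat n E ends r r * f r + (\<Sum>c\<in>?T. cmat n E ends r c * f c)"
    using \<open>r < n\<close> by (simp add: sum.remove)
  also have "\<dots> = (\<Sum>c\<in>?T. int (card (?E c)) * (f c - f r))"
    by (simp add: cmat_def sum_distrib_right right_diff_distrib sum_subtractf)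
  also have "\<dots> = (\<Sum>c\<in>?T. \<Sum>e\<in>?E c. (\<Sum>x\<in>ends e. f x) - 2 * f r)"
    by (intro sum.cong) auto
  also have "\<dots> = (\<Sum>e\<in>(\<Union>c\<in>?T. ?E c). (\<Sum>x\<in>ends e. f x) - 2 * f r)"
    by (rule sum.UNION_disjoint[symmetric]) (auto simp: finE doubleton_eq_iff)
  also have "(\<Union>c\<in>?T. ?E c) = {e\<in>E. r \<in> ends e}"
    using mg unfolding multigraph_def by (auto 0 4 simp: insert_commute)
  finally show ?thesis .
qed

lemma cmat_mult_eq_sum_cut_edges:
  assumes mg: "multigraph n E ends" and "r < n" and "C \<subseteq> E"
    and const: "\<And>e x y. e \<in> E - C \<Longrightarrow> x \<in> ends e \<Longrightarrow> y \<in> ends e \<Longrightarrow> f x = f y"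
  shows "(\<Sum>c<n. cmat n E ends r c * f c) =
    (\<Sum>e\<in>{e\<in>C. r \<in> ends e}. (\<Sum>x\<in>ends e. f x) - 2 * f r)"
proof -
  have "(\<Sum>e\<in>{e\<in>E. r \<in> ends e}. (\<Sum>x\<in>ends e. f x) - 2 * f r) =
      (\<Sum>e\<in>{e\<in>C. r \<in> ends e}. (\<Sum>x\<in>ends e. f x) - 2 * f r)"
  proof (rule sum.mono_neutral_right)
    show "finite {e\<in>E. r \<in> ends e}"
      using mg by (simp add: multigraph_def)
    show "\<forall>e\<in>{e\<in>E. r \<in> ends e} - {e\<in>C. r \<in> ends e}. (\<Sum>x\<in>ends e. f x) - 2 * f r = 0"
    proof
      fix e assume e: "e \<in> {e\<in>E. r \<in> ends e} - {e\<in>C. r \<in> ends e}"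
      then obtain a b where "a \<noteq> b" "ends e = {a, b}"
        using mg unfolding multigraph_def by blast
      with e const[of e] show "(\<Sum>x\<in>ends e. f x) - 2 * f r = 0"
        by auto
    qed
  qed (use \<open>C \<subseteq> E\<close> in auto)
  then show ?thesis
    using cmat_mult_eq_sum_incident_edges[OF mg \<open>r < n\<close>] by simp
qed

locale nonoverlapping_path_system =
  fixes n :: nat and E :: "'e set" and ends :: "'e \<Rightarrow> nat set" and i j :: nat
    and P :: "(nat list \<times> 'e list) set" and l :: nat
  assumes multigraph: "multigraph n E ends"
    and connected: "conn n E ends"
    and i_less: "i < n" and i_neq_j: "i \<noteq> j"
    and nonempty: "P \<noteq> {}"
    and paths: "\<And>p. p \<in> P \<Longrightarrow> path_from_to E ends i j p"
    and path_length: "\<And>p. p \<in> P \<Longrightarrow> length (snd p) = l"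
    and disconnecting: "\<And>t. t < l \<Longrightarrow> \<not> conn n (E - (\<lambda>p. snd p ! t) ` P) ends"
    and non_overlapping: "non_overlapping P"
begin

definition cut_edges :: "nat \<Rightarrow> 'e set" where
  "cut_edges t = (\<lambda>p. snd p ! t) ` P"

definition near_side :: "nat \<Rightarrow> nat set" where
  "near_side t = {v. (i, v) \<in> (adjacency ends (E - cut_edges t))\<^sup>*}"

definition potential :: "nat \<Rightarrow> int" where
  "potential v = (\<Sum>t<l. of_bool (v \<notin> near_side t))"

lemma is_path: "p \<in> P \<Longrightarrow> is_path E ends p"
  using paths by (simp add: path_from_to_def)

lemma path_edge:
  assumes "p \<in> P" and "t < l"
  shows "snd p ! t \<in> E" and "ends (snd p ! t) = {fst p ! t, fst p ! Suc t}"
  using is_path[OF assms(1)] path_length[OF assms(1)] assms(2)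
  by (auto simp: is_path_def Let_def)

lemma path_first: "fst p ! 0 = i" and path_last: "fst p ! l = j" if "p \<in> P"
proof -
  have "length (fst p) = Suc l"
    using is_path[OF that] path_length[OF that] by (simp add: is_path_def Let_def)
  moreover have "hd (fst p) = i" "last (fst p) = j"
    using paths[OF that] by (simp_all add: path_from_to_def)
  ultimately show "fst p ! 0 = i" "fst p ! l = j"
    by (simp_all add: hd_conv_nth last_conv_nth flip: length_greater_0_conv)
qed

lemma length_pos: "0 < l"
proof -
  obtain p where "p \<in> P"
    using nonempty by blast
  with path_first[of p] path_last[of p] i_neq_j show ?thesis
    by (cases l) auto
qed

lemma cut_edges_subset: "cut_edges t \<subseteq> E" if "t < l"
  using path_edge that by (auto simp: cut_edges_def)

lemma path_edges_disjoint:
  "p \<in> P \<Longrightarrow> q \<in> P \<Longrightarrow> p \<noteq> q \<Longrightarrow> set (snd p) \<inter> set (snd q) = {}"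
  using non_overlapping by (simp add: non_overlapping_def)

lemma path_edge_in_cut_edges_iff:
  assumes p: "p \<in> P" and "s < l" and "t < l"
  shows "snd p ! s \<in> cut_edges t \<longleftrightarrow> s = t"
proof
  assume "snd p ! s \<in> cut_edges t"
  then obtain q where q: "q \<in> P" "snd p ! s = snd q ! t"
    by (auto simp: cut_edges_def)
  have "p = q"
    using path_edges_disjoint[OF p q(1)] q(2) \<open>s < l\<close> \<open>t < l\<close> p q(1)
    by (metis disjoint_iff nth_mem path_length)
  then show "s = t"
    using is_path[OF p] q(2) \<open>s < l\<close> \<open>t < l\<close> path_length[OF p]
    by (simp add: is_path_def Let_def nth_eq_iff_index_eq)
qed (auto simp: cut_edges_def p)

lemma path_vertex_in_near_side:
  assumes "p \<in> P" and "t < l" and "s \<le> t"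
  shows "fst p ! s \<in> near_side t"
proof -
  have "(fst p ! 0, fst p ! s) \<in> (adjacency ends (E - cut_edges t))\<^sup>*"
    using assms path_edge_in_cut_edges_iff
    by (intro is_path_segment_reachable is_path) (auto simp: path_length)
  then show ?thesis
    using path_first[OF \<open>p \<in> P\<close>] by (simp add: near_side_def)
qed

lemma path_vertex_reaches_last:
  assumes "p \<in> P" and "t < s" and "s \<le> l"
  shows "(fst p ! s, j) \<in> (adjacency ends (E - cut_edges t))\<^sup>*"
proof -
  have "(fst p ! s, fst p ! l) \<in> (adjacency ends (E - cut_edges t))\<^sup>*"
    using assms path_edge_in_cut_edges_iff
    by (intro is_path_segment_reachable is_path) (auto simp: path_length)
  then show ?thesis
    using path_last[OF \<open>p \<in> P\<close>] by simp
qed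

lemma last_notin_near_side:
  assumes "t < l"
  shows "j \<notin> near_side t"
proof
  assume j: "j \<in> near_side t"
  have "(i, x) \<in> (adjacency ends (E - cut_edges t))\<^sup>*"
    if "e \<in> cut_edges t" "x \<in> ends e" for e x
  proof -
    obtain p where p: "p \<in> P" "e = snd p ! t"
      using \<open>e \<in> cut_edges t\<close> by (auto simp: cut_edges_def)
    have "fst p ! t \<in> near_side t"
      using p(1) \<open>t < l\<close> by (rule path_vertex_in_near_side) simp
    moreover have "fst p ! Suc t \<in> near_side t"
      using path_vertex_reaches_last[OF p(1), of t "Suc t"] \<open>t < l\<close> j
      by (auto simp: near_side_def intro: rtrancl_trans adjacency_rtrancl_sym)
    ultimately show ?thesis
      using \<open>x \<in> ends e\<close> path_edge(2)[OF p(1) \<open>t < l\<close>] p(2)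
      by (auto simp: near_side_def)
  qed
  then have "conn n (E - cut_edges t) ends"
    by (intro conn_Diff_if_endpoints_reachable[OF connected i_less])
  with disconnecting[OF \<open>t < l\<close>] show False
    by (simp add: cut_edges_def)
qed

lemma path_vertex_in_near_side_iff:
  assumes "p \<in> P" and "t < l" and "s \<le> l"
  shows "fst p ! s \<in> near_side t \<longleftrightarrow> s \<le> t"
proof
  assume "fst p ! s \<in> near_side t"
  then show "s \<le> t"
    using path_vertex_reaches_last[OF \<open>p \<in> P\<close>, of t s] last_notin_near_side \<open>t < l\<close> \<open>s \<le> l\<close>
    by (force simp: near_side_def intro: rtrancl_trans)
qed (rule path_vertex_in_near_side[OF assms(1,2)])

lemma cmat_mult_far_side_indicator:
  assumes "t < l" and "r < n"
  shows "(\<Sum>c<n. cmat n E ends r c * of_bool (c \<notin> near_side t)) =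
    (\<Sum>p\<in>P. of_bool (r = fst p ! t) - of_bool (r = fst p ! Suc t))"
proof -
  let ?f = "\<lambda>c. of_bool (c \<notin> near_side t) :: int"
  have "?f x = ?f y" if "e \<in> E - cut_edges t" "x \<in> ends e" "y \<in> ends e" for e x y
  proof -
    have "e \<in> E"
      using that(1) by simp
    then obtain a b where ab: "ends e = {a, b}"
      using multigraph unfolding multigraph_def by blast
    then have "(a, b) \<in> adjacency ends (E - cut_edges t)"
      using that(1) by (auto simp: adjacency_def)
    then have ab_reach: "(a, b) \<in> (adjacency ends (E - cut_edges t))\<^sup>*"
      by (rule r_into_rtrancl)
    have "a \<in> near_side t \<longleftrightarrow> b \<in> near_side t"
      using rtrancl_trans[OF _ ab_reach] rtrancl_trans[OF _ adjacency_rtrancl_sym[OF ab_reach]]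
      by (auto simp: near_side_def)
    then show ?thesis
      using ab that(2,3) by auto
  qed
  then have "(\<Sum>c<n. cmat n E ends r c * ?f c) =
      (\<Sum>e\<in>{e\<in>cut_edges t. r \<in> ends e}. (\<Sum>x\<in>ends e. ?f x) - 2 * ?f r)"
    by (rule cmat_mult_eq_sum_cut_edges[OF multigraph \<open>r < n\<close> cut_edges_subset[OF \<open>t < l\<close>]])
  also have "\<dots> = (\<Sum>e\<in>cut_edges t. if r \<in> ends e then (\<Sum>x\<in>ends e. ?f x) - 2 * ?f r else 0)"
    using finite_subset[OF cut_edges_subset[OF \<open>t < l\<close>]] multigraph
    by (simp add: sum.inter_filter multigraph_def)
  also have "\<dots> = (\<Sum>p\<in>P. if r \<in> ends (snd p ! t) then (\<Sum>x\<in>ends (snd p ! t). ?f x) - 2 * ?f r else 0)"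
    unfolding cut_edges_def
  proof (rule sum.reindex_cong[OF _ refl refl])
    show "inj_on (\<lambda>p. snd p ! t) P"
      using path_edges_disjoint path_length \<open>t < l\<close>
      by (intro inj_onI) (metis disjoint_iff nth_mem)
  qed
  also have "\<dots> = (\<Sum>p\<in>P. of_bool (r = fst p ! t) - of_bool (r = fst p ! Suc t))"
  proof (rule sum.cong[OF refl])
    fix p assume p: "p \<in> P"
    have near: "fst p ! t \<in> near_side t" and far: "fst p ! Suc t \<notin> near_side t"
      using path_vertex_in_near_side_iff[OF p \<open>t < l\<close>] \<open>t < l\<close> by auto
    then have "fst p ! t \<noteq> fst p ! Suc t"
      by auto
    then show "(if r \<in> ends (snd p ! t) then (\<Sum>x\<in>ends (snd p ! t). ?f x) - 2 * ?f r else 0) =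
        of_bool (r = fst p ! t) - of_bool (r = fst p ! Suc t)"
      using path_edge(2)[OF p \<open>t < l\<close>] near far by auto
  qed
  finally show ?thesis .
qed

lemma cmat_mult_potential:
  assumes "r < n"
  shows "(\<Sum>c<n. cmat n E ends r c * potential c) = int (card P) * (of_bool (r = i) - of_bool (r = j))"
proof -
  have "(\<Sum>c<n. cmat n E ends r c * potential c) =
      (\<Sum>t<l. \<Sum>c<n. cmat n E ends r c * of_bool (c \<notin> near_side t))"
    unfolding potential_def sum_distrib_left by (rule sum.swap)
  also have "\<dots> = (\<Sum>t<l. \<Sum>p\<in>P. of_bool (r = fst p ! t) - of_bool (r = fst p ! Suc t))"
    using assms by (intro sum.cong refl cmat_mult_far_side_indicator) simp
  also have "\<dots> = (\<Sum>p\<in>P. \<Sum>t<l. of_bool (r = fst p ! t) - of_bool (r = fst p ! Suc t))"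
    by (rule sum.swap)
  also have "\<dots> = (\<Sum>p\<in>P. of_bool (r = i) - of_bool (r = j))"
  proof (rule sum.cong[OF refl])
    fix p assume "p \<in> P"
    then show "(\<Sum>t<l. of_bool (r = fst p ! t) - of_bool (r = fst p ! Suc t)) =
        of_bool (r = i) - (of_bool (r = j) :: int)"
      using sum_lessThan_telescope'[of "\<lambda>t. of_bool (r = fst p ! t) :: int" l]
      by (simp add: path_first path_last)
  qed
  finally show ?thesis
    by simp
qed

lemma potential_path_vertex:
  assumes "p \<in> P" and "s \<le> l"
  shows "potential (fst p ! s) = int s"
proof -
  have "potential (fst p ! s) = (\<Sum>t<l. of_bool (t < s))"
    unfolding potential_def using path_vertex_in_near_side_iff[OF assms(1) _ assms(2)]
    by (intro sum.cong) auto
  also have "\<dots> = int (card {t. t < l \<and> t < s})"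
    by (simp add: sum.inter_filter[symmetric] of_bool_def)
  also have "{t. t < l \<and> t < s} = {..<s}"
    using assms(2) by auto
  finally show ?thesis
    by simp
qed

lemma potential_bounds: "0 \<le> potential v" "potential v \<le> int l"
proof -
  have "potential v \<le> (\<Sum>t<l. 1)"
    unfolding potential_def by (intro sum_mono) simp
  then show "potential v \<le> int l"
    by simp
qed (simp add: potential_def sum_nonneg)

lemma Gcd_potential_differences:
  "Gcd ((\<lambda>v. potential v - potential (n - 1)) ` {..<n - 1}) = 1"
proof -
  obtain p where p: "p \<in> P"
    using nonempty by blast
  define c where "c = potential (n - 1)"
  define s where "s = (if c < int l then nat c + 1 else nat c - 1)"
  have "s \<le> l" and "int s - c = 1 \<or> int s - c = -1"
    using potential_bounds[of "n - 1"] length_pos by (auto simp: s_def c_def)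
  then have unit: "is_unit (int s - c)"
    by auto
  have "potential (fst p ! s) \<noteq> potential (n - 1)"
    using \<open>int s - c = 1 \<or> int s - c = -1\<close> potential_path_vertex[OF p \<open>s \<le> l\<close>]
    unfolding c_def by auto
  then have "fst p ! s \<noteq> n - 1"
    by auto
  moreover have "fst p ! s < n"
    using is_path_vertex_less[OF multigraph is_path[OF p]] path_length[OF p] length_pos \<open>s \<le> l\<close>
    by auto
  ultimately have "int s - c \<in> (\<lambda>v. potential v - c) ` {..<n - 1}"
    using potential_path_vertex[OF p \<open>s \<le> l\<close>] by (intro image_eqI[of _ _ "fst p ! s"]) auto
  with unit have "Gcd ((\<lambda>v. potential v - c) ` {..<n - 1}) = 1"
    by (rule Gcd_eq_1_I)
  then show ?thesis
    by (simp add: c_def)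
qed

end

theorem lemma2p2:
  fixes n :: nat and E :: "'e set" and ends :: "'e \<Rightarrow> nat set"
    and i j h :: nat and P :: "(nat list \<times> 'e list) set"
  assumes "multigraph n E ends"
    and "conn n E ends"
    and "i < n" and "j < n" and "i \<noteq> j"
    and "h > 0"
    and "path_system n E ends i j h P"
    and "non_overlapping P"
  shows "pair_order n E ends i j h"
proof -
  obtain l where "card P = h"
    and paths: "\<forall>p\<in>P. path_from_to E ends i j p"
    and lengths: "\<forall>p\<in>P. length (snd p) = l"
    and cuts: "\<forall>k\<in>{1..l}. \<not> conn n (E - (\<lambda>p. snd p ! (k - 1)) ` P) ends"
    using assms(7) unfolding path_system_def by blast
  interpret nonoverlapping_path_system n E ends i j P l
  proof
    show "P \<noteq> {}"
      using \<open>card P = h\<close> \<open>h > 0\<close> by auto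
    show "\<not> conn n (E - (\<lambda>p. snd p ! t) ` P) ends" if "t < l" for t
      using cuts[rule_format, of "Suc t"] that by simp
  qed (use assms paths lengths in auto)
  have "\<forall>r<n. (\<Sum>c<n. cmat n E ends r c * potential c) =
      int h * ((if r = i then 1 else 0) - (if r = j then 1 else 0))"
    using cmat_mult_potential \<open>card P = h\<close> by (simp add: of_bool_def)
  then show ?thesis
    unfolding pair_order_def using \<open>h > 0\<close> Gcd_potential_differences by blast
qed

end
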